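(* Let $\bm c_0\in\mathbb R^{|E|}$ be a metric cost vector on the complete graph $K_n=(V,E)$ with $TOUR(\bm c_0)=1$, and let $\bar{\bm x}^{(0)}$ be an optimal solution of the subtour elimination problem $SEP(\bm c_0)$. Let \[ \bm c_1 \in \arg\min \Big\{ \sum_{\{i,j\}\in E} \bar x^{(0)}_{ij} c_{ij} \;:\; \sum_{\{i,j\}\in E} \bar z_{ij} c_{ij} \ge 1 \ \forall \bar{\bm z}\in\mathcal T_n,\ c_{ij}\le c_{ik}+c_{jk}\ \forall i,j,k\in V,\ c_{ij}\ge 0\ \forall \{i,j\}\in E \Big\}. \] Then \[ \frac{TOUR(\bm c_1)}{SUBT(\bm c_1)} \ge \frac{TOUR(\bm c_0)}{SUBT(\bm c_0)}. \]
   Context: $K_n=(V,E)$ is the complete undirected graph on $V=\{1,\dots,n\}$, with symmetric edge costs. A cost vector $\bm c$ is metric if $c_{ij}\ge 0$, $c_{ij}\le c_{ik}+c_{jk}$ for all $i,j,k$, (and $c_{ij}=0$ iff $i=j$). For $S\subset V$, $\delta(S)$ is the set of edges with exactly one endpoint in $S$, and $\mathcal S=\{S\subset V: 3\le|S|\le n-3\}$. The subtour elimination polytope is $P_{SEP}=\{\bm x\in\mathbb R^{|E|}_+ : \sum_{e\in\delta(\{v\})}x_e=2\ \forall v,\ \sum_{e\in\delta(S)}x_e\ge2\ \forall S\in\mathcal S,\ 0\le x_e\le1\ \forall e\}$; $SEP(\bm c)$ is the LP $\min\{\bm c^T\bm x:\bm x\in P_{SEP}\}$ and $SUBT(\bm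 c)$ its optimal value. $\mathcal T_n$ is the set of incidence vectors of tours (Hamiltonian cycles) of $K_n$, and $TOUR(\bm c)=\min_{\bm z\in\mathcal T_n}\bm c^T\bm z$ is the optimal TSP value. *)

theory Defs
  imports Complex_Main
begin

text \<open>Complete graph K_n on V = {1..n}; edges are 2-element vertex sets.
 Edge vectors (costs, LP solutions) are functions on edges (values off E are irrelevant).\<close>

definition verts :: "nat \<Rightarrow> nat set" where
  "verts n = {1..n}"

definition edges :: "nat \<Rightarrow> nat set set" where
  "edges n = {{i, j} | i j. i \<in> verts n \<and> j \<in> verts n \<and> i \<noteq> j}"

definition cut :: "nat \<Rightarrow> nat set \<Rightarrow> nat set set" where
  "cut n S = {e \<in> edges n. card (e \<inter> S) = 1}"

definition lin :: "nat \<Rightarrow> (nat set \<Rightarrow> real) \<Rightarrow> (nat set \<Rightarrow> real) \<Rightarrow> real" where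
  "lin n c x = (\<Sum>e\<in>edges n. c e * x e)"

text \<open>c_{ij} >= 0 and c_{ij} <= c_{ik} + c_{jk} for all i,j,k (degenerate index cases are trivial).\<close>
definition metric :: "nat \<Rightarrow> (nat set \<Rightarrow> real) \<Rightarrow> bool" where
  "metric n c \<longleftrightarrow> (\<forall>e\<in>edges n. 0 \<le> c e) \<and>
     (\<forall>i\<in>verts n. \<forall>j\<in>verts n. \<forall>k\<in>verts n. i \<noteq> j \<and> i \<noteq> k \<and> j \<noteq> k \<longrightarrow>
        c {i, j} \<le> c {i, k} + c {j, k})"

definition sep_feasible :: "nat \<Rightarrow> (nat set \<Rightarrow> real) \<Rightarrow> bool" where
  "sep_feasible n x \<longleftrightarrow>
     (\<forall>e\<in>edges n. 0 \<le> x e \<and> x e \<le> 1) \<and>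
     (\<forall>v\<in>verts n. (\<Sum>e\<in>cut n {v}. x e) = 2) \<and>
     (\<forall>S. S \<subseteq> verts n \<and> 3 \<le> card S \<and> card S + 3 \<le> n \<longrightarrow> (\<Sum>e\<in>cut n S. x e) \<ge> 2)"

definition SUBT :: "nat \<Rightarrow> (nat set \<Rightarrow> real) \<Rightarrow> real" where
  "SUBT n c = Inf (lin n c ` {x. sep_feasible n x})"

definition sep_optimal :: "nat \<Rightarrow> (nat set \<Rightarrow> real) \<Rightarrow> (nat set \<Rightarrow> real) \<Rightarrow> bool" where
  "sep_optimal n c x \<longleftrightarrow> sep_feasible n x \<and> (\<forall>y. sep_feasible n y \<longrightarrow> lin n c x \<le> lin n c y)"

definition tour_edges :: "nat \<Rightarrow> (nat \<Rightarrow> nat) \<Rightarrow> nat set set" where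
  "tour_edges n p = {{p i, p (Suc i mod n)} | i. i < n}"

definition tours :: "nat \<Rightarrow> (nat set \<Rightarrow> real) set" where
  "tours n = {(\<lambda>e. if e \<in> tour_edges n p then 1 else 0) | p. bij_betw p {0..<n} (verts n)}"

definition TOUR :: "nat \<Rightarrow> (nat set \<Rightarrow> real) \<Rightarrow> real" where
  "TOUR n c = Inf (lin n c ` tours n)"

definition c1_feasible :: "nat \<Rightarrow> (nat set \<Rightarrow> real) \<Rightarrow> bool" where
  "c1_feasible n c \<longleftrightarrow> (\<forall>z\<in>tours n. lin n c z \<ge> 1) \<and> metric n c"

definition c1_argmin :: "nat \<Rightarrow> (nat set \<Rightarrow> real) \<Rightarrow> (nat set \<Rightarrow> real) \<Rightarrow> bool" where
  "c1_argmin n x c \<longleftrightarrow> c1_feasible n c \<and> (\<forall>c'. c1_feasible n c' \<longrightarrow> lin n x c \<le> lin n x c')"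

end

theory Submission
  imports Defs
begin

text \<open>The cost vector c0 is itself feasible for the linear program defining c1, hence
  SUBT c1 \<le> c1 \<cdot> x0 \<le> c0 \<cdot> x0 = SUBT c0, while TOUR c1 \<ge> 1 = TOUR c0. It remains to see
  SUBT c1 > 0. Since TOUR c1 > 0, some edge {u, w} has positive cost; the vertices at c1-distance 0
  from u then form a proper cut whose edges all cost at least the least positive distance from u
  (triangle inequality), and every SEP solution puts weight at least 2 on every proper cut.\<close>

lemma finite_edges: "finite (edges n)"
proof -
  have "edges n \<subseteq> Pow (verts n)" by (auto simp: edges_def)
  then show ?thesis by (rule finite_subset) (simp add: verts_def)
qed

lemma finite_cut: "finite (cut n S)"
  using finite_edges by (simp add: cut_def)

lemma doubleton_in_edges_iff: "{a, b} \<in> edges n \<longleftrightarrow> a \<in> verts n \<and> b \<in> verts n \<and> a \<noteq> b"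
  unfolding edges_def by (auto simp: doubleton_eq_iff)

lemma edgesE:
  assumes "e \<in> edges n"
  obtains a b where "e = {a, b}" "a \<in> verts n" "b \<in> verts n" "a \<noteq> b"
  using assms by (auto simp: edges_def)

lemma cutE:
  assumes "e \<in> cut n S"
  obtains a b where "e = {a, b}" "a \<in> verts n" "b \<in> verts n" "a \<in> S" "b \<notin> S"
proof -
  obtain i j where e: "e = {i, j}" "i \<in> verts n" "j \<in> verts n" "i \<noteq> j"
    using assms by (auto simp: cut_def elim: edgesE)
  have "card (e \<inter> S) = 1" using assms by (simp add: cut_def)
  then have "i \<in> S \<and> j \<notin> S \<or> j \<in> S \<and> i \<notin> S"
    using e by (cases "i \<in> S"; cases "j \<in> S") (auto simp: Int_insert_left)
  then show ?thesis using that e by (metis insert_commute)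
qed

lemma cut_singleton: "cut n {a} = {e \<in> edges n. a \<in> e}"
  unfolding cut_def by (auto simp: Int_insert_right split: if_splits)

lemma cut_pair:
  assumes "a \<noteq> b"
  shows "cut n {a, b} = (cut n {a} \<union> cut n {b}) - {{a, b}}"
proof -
  have "card (e \<inter> {a, b}) = 1 \<longleftrightarrow> (a \<in> e \<or> b \<in> e) \<and> e \<noteq> {a, b}"
    if "e \<in> edges n" for e
    using that
  proof (cases rule: edgesE)
    case (1 i j)
    then show ?thesis
      using assms by (cases "i = a"; cases "i = b"; cases "j = a"; cases "j = b") (auto simp: Int_insert_left)
  qed
  then show ?thesis unfolding cut_singleton by (auto simp: cut_def)
qed

lemma cut_complement:
  assumes "S \<subseteq> verts n"
  shows "cut n (verts n - S) = cut n S"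
proof -
  have "card (e \<inter> (verts n - S)) = 1 \<longleftrightarrow> card (e \<inter> S) = 1" if "e \<in> edges n" for e
    using that
  proof (cases rule: edgesE)
    case (1 a b)
    then show ?thesis using assms by (cases "a \<in> S"; cases "b \<in> S") (auto simp: Int_insert_left)
  qed
  then show ?thesis unfolding cut_def by blast
qed

lemma sep_feasible_cut_pair:
  assumes x: "sep_feasible n x" and ab: "a \<in> verts n" "b \<in> verts n" "a \<noteq> b"
  shows "(\<Sum>e\<in>cut n {a, b}. x e) \<ge> 2"
proof -
  have ab_edge: "{a, b} \<in> edges n" using ab by (simp add: doubleton_in_edges_iff)
  have common: "cut n {a} \<inter> cut n {b} = {{a, b}}"
    using ab_edge ab(3) by (auto simp: cut_singleton doubleton_eq_iff doubleton_in_edges_iff elim!: edgesE)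
  have "(\<Sum>e\<in>cut n {a, b}. x e) = (\<Sum>e\<in>cut n {a} \<union> cut n {b}. x e) - x {a, b}"
    using common by (auto simp: cut_pair[OF ab(3)] sum_diff1 finite_cut)
  also have "\<dots> = (\<Sum>e\<in>cut n {a}. x e) + (\<Sum>e\<in>cut n {b}. x e) - 2 * x {a, b}"
    using sum.union_inter[OF finite_cut finite_cut, of x n "{a}" n "{b}"] common by simp
  also have "\<dots> = 4 - 2 * x {a, b}"
    using x ab by (simp add: sep_feasible_def)
  finally show ?thesis
    using x ab_edge by (simp add: sep_feasible_def)
qed

lemma sep_feasible_cut_small:
  assumes x: "sep_feasible n x" and S: "S \<subseteq> verts n" "card S = 1 \<or> card S = 2"
  shows "(\<Sum>e\<in>cut n S. x e) \<ge> 2"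
  using S(2)
proof
  assume "card S = 1"
  then obtain a where "S = {a}" by (auto simp: card_Suc_eq)
  then show ?thesis using x S(1) by (simp add: sep_feasible_def)
next
  assume "card S = 2"
  then obtain a b where "S = {a, b}" "a \<noteq> b" by (auto simp: card_Suc_eq numeral_2_eq_2)
  then show ?thesis using x S(1) sep_feasible_cut_pair by simp
qed

text \<open>The subtour constraints are only imposed for 3 \<le> |S| \<le> n - 3; the remaining proper
  cuts are covered by the degree equations, using that S and its complement have the same cut.\<close>

lemma sep_feasible_cut_ge_2:
  assumes x: "sep_feasible n x" and S: "S \<subseteq> verts n" "S \<noteq> {}" "S \<noteq> verts n"
  shows "(\<Sum>e\<in>cut n S. x e) \<ge> 2"
proof -
  have finV: "finite (verts n)" and cardV: "card (verts n) = n" by (simp_all add: verts_def)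
  then have "finite S" using S(1) finite_subset by blast
  then have "1 \<le> card S" using S(2) by (simp add: Suc_le_eq card_gt_0_iff)
  have "S \<subset> verts n" using S(1,3) by blast
  then have "card S < n" using psubset_card_mono[OF finV] cardV by simp
  have card_compl: "card (verts n - S) = n - card S"
    using S(1) \<open>finite S\<close> cardV by (simp add: card_Diff_subset)
  consider "card S \<le> 2" | "n - card S \<le> 2" | "3 \<le> card S" "card S + 3 \<le> n"
    by linarith
  then show ?thesis
  proof cases
    case 1
    then show ?thesis using sep_feasible_cut_small[OF x S(1)] \<open>1 \<le> card S\<close> by linarith
  next
    case 2
    then have "card (verts n - S) = 1 \<or> card (verts n - S) = 2"
      using card_compl \<open>card S < n\<close> by linarith
    then show ?thesis
      using sep_feasible_cut_small[OF x Diff_subset[of "verts n" S]] cut_complement[OF S(1)] by simp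
  next
    case 3
    then show ?thesis using x S(1) by (simp add: sep_feasible_def)
  qed
qed

lemma sep_feasible_nonneg: "sep_feasible n x \<Longrightarrow> \<forall>e\<in>edges n. 0 \<le> x e"
  by (simp add: sep_feasible_def)

lemma lin_commute: "lin n c x = lin n x c"
  unfolding lin_def by (simp add: mult.commute)

lemma lin_nonneg:
  assumes "\<forall>e\<in>edges n. 0 \<le> c e" "\<forall>e\<in>edges n. 0 \<le> x e"
  shows "0 \<le> lin n c x"
  unfolding lin_def using assms by (simp add: sum_nonneg)

lemma lin_ge_cut_bound:
  assumes x: "sep_feasible n x" and c: "\<forall>e\<in>edges n. 0 \<le> c e"
    and S: "S \<subseteq> verts n" "S \<noteq> {}" "S \<noteq> verts n"
    and h: "0 \<le> h" "\<forall>e\<in>cut n S. h \<le> c e"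
  shows "2 * h \<le> lin n c x"
proof -
  have x_nonneg: "\<forall>e\<in>edges n. 0 \<le> x e" using x by (rule sep_feasible_nonneg)
  have "2 * h \<le> h * (\<Sum>e\<in>cut n S. x e)"
    using sep_feasible_cut_ge_2[OF x S] h(1) by (simp add: mult.commute mult_left_mono)
  also have "\<dots> = (\<Sum>e\<in>cut n S. h * x e)" by (simp add: sum_distrib_left)
  also have "\<dots> \<le> (\<Sum>e\<in>cut n S. c e * x e)"
    using h(2) x_nonneg by (intro sum_mono mult_right_mono) (auto simp: cut_def)
  also have "\<dots> \<le> lin n c x"
    unfolding lin_def using c x_nonneg by (intro sum_mono2[OF finite_edges]) (auto simp: cut_def)
  finally show ?thesis .
qed

lemma metric_nonneg: "metric n c \<Longrightarrow> \<forall>e\<in>edges n. 0 \<le> c e"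
  by (simp add: metric_def)

lemma metric_triangle:
  assumes "metric n c" "i \<in> verts n" "j \<in> verts n" "k \<in> verts n" "i \<noteq> j" "i \<noteq> k" "j \<noteq> k"
  shows "c {i, j} \<le> c {i, k} + c {j, k}"
  using assms unfolding metric_def by blast

lemma metric_cut_bounded_below:
  assumes c: "metric n c" and uw: "{u, w} \<in> edges n" "c {u, w} > 0"
  obtains S h where "S \<subseteq> verts n" "S \<noteq> {}" "S \<noteq> verts n" "0 < h" "\<forall>e\<in>cut n S. h \<le> c e"
proof -
  have u: "u \<in> verts n" and w: "w \<in> verts n" and "u \<noteq> w"
    using uw(1) by (simp_all add: doubleton_in_edges_iff)
  define S where "S = {k \<in> verts n. k = u \<or> c {u, k} = 0}"
  define h where "h = Min ((\<lambda>k. c {u, k}) ` (verts n - S))"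
  have far: "0 < c {u, k}" if k: "k \<in> verts n - S" for k
  proof -
    have "{u, k} \<in> edges n" using k u by (auto simp: S_def doubleton_in_edges_iff)
    then have "0 \<le> c {u, k}" using metric_nonneg[OF c] by blast
    moreover have "c {u, k} \<noteq> 0" using k by (simp add: S_def)
    ultimately show ?thesis by linarith
  qed
  have w_far: "w \<in> verts n - S" using w uw(2) \<open>u \<noteq> w\<close> by (simp add: S_def)
  have fin: "finite (verts n - S)" by (simp add: verts_def)
  have "0 < h" unfolding h_def using fin w_far far by (subst Min_gr_iff) auto
  moreover have "h \<le> c e" if e_cut: "e \<in> cut n S" for e
  proof -
    from e_cut obtain a b where e: "e = {a, b}" "a \<in> verts n" "b \<in> verts n" "a \<in> S" "b \<notin> S"
      by (rule cutE)
    have "h \<le> c {u, b}" unfolding h_def using fin e(3,5) by (intro Min_le) auto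
    also have "c {u, b} \<le> c {a, b}"
    proof (cases "a = u")
      case False
      then have "c {u, a} = 0" "b \<noteq> u" "a \<noteq> b" using e(3-5) u by (auto simp: S_def)
      moreover have "c {u, b} \<le> c {u, a} + c {b, a}"
        using metric_triangle[OF c u e(3,2)] False calculation by simp
      ultimately show ?thesis by (simp add: insert_commute)
    qed simp
    finally show ?thesis using e(1) by simp
  qed
  moreover have "S \<subseteq> verts n" "u \<in> S" by (auto simp: S_def u)
  ultimately show ?thesis using that w_far by blast
qed

lemma tours_nonneg: "z \<in> tours n \<Longrightarrow> \<forall>e\<in>edges n. 0 \<le> z e"
  by (auto simp: tours_def)

lemma tours_nonempty: "tours n \<noteq> {}"
proof -
  have "bij_betw Suc {0..<n} (verts n)"
    by (simp add: bij_betw_def verts_def image_Suc_atLeastLessThan atLeastLessThanSuc_atLeastAtMost)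
  then show ?thesis unfolding tours_def by blast
qed

lemma TOUR_le:
  assumes "\<forall>e\<in>edges n. 0 \<le> c e" "z \<in> tours n"
  shows "TOUR n c \<le> lin n c z"
  unfolding TOUR_def using assms lin_nonneg tours_nonneg
  by (intro cInf_lower bdd_belowI2[where m = 0]) auto

lemma TOUR_ge: "(\<forall>z\<in>tours n. b \<le> lin n c z) \<Longrightarrow> b \<le> TOUR n c"
  unfolding TOUR_def using tours_nonempty by (intro cInf_greatest) auto

lemma SUBT_le:
  assumes "\<forall>e\<in>edges n. 0 \<le> c e" "sep_feasible n x"
  shows "SUBT n c \<le> lin n c x"
  unfolding SUBT_def using assms lin_nonneg sep_feasible_nonneg
  by (intro cInf_lower bdd_belowI2[where m = 0]) auto

lemma SUBT_ge:
  assumes "sep_feasible n x" "\<forall>y. sep_feasible n y \<longrightarrow> b \<le> lin n c y"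
  shows "b \<le> SUBT n c"
  unfolding SUBT_def using assms by (intro cInf_greatest) auto

lemma SUBT_eq_if_sep_optimal:
  assumes "sep_optimal n c x"
  shows "SUBT n c = lin n c x"
proof (rule antisym)
  show "SUBT n c \<le> lin n c x"
    unfolding SUBT_def using assms
    by (intro cInf_lower bdd_belowI2[where m = "lin n c x"]) (auto simp: sep_optimal_def)
  show "lin n c x \<le> SUBT n c"
    using assms by (intro SUBT_ge) (auto simp: sep_optimal_def)
qed

lemma c1_feasible_iff_TOUR_ge_1: "c1_feasible n c \<longleftrightarrow> metric n c \<and> 1 \<le> TOUR n c"
proof
  show "c1_feasible n c \<Longrightarrow> metric n c \<and> 1 \<le> TOUR n c"
    using TOUR_ge by (simp add: c1_feasible_def)
  show "metric n c \<and> 1 \<le> TOUR n c \<Longrightarrow> c1_feasible n c"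
    using TOUR_le[OF metric_nonneg] order_trans unfolding c1_feasible_def by blast
qed

lemma SUBT_pos_if_TOUR_pos:
  assumes c: "metric n c" and x: "sep_feasible n x" and tour: "0 < TOUR n c"
  shows "0 < SUBT n c"
proof -
  have "\<exists>e\<in>edges n. c e \<noteq> 0"
  proof (rule ccontr)
    assume "\<not> ?thesis"
    then have "lin n c z = 0" for z by (simp add: lin_def)
    then have "TOUR n c \<le> 0"
      using TOUR_le[OF metric_nonneg[OF c]] tours_nonempty by (metis all_not_in_conv)
    then show False using tour by simp
  qed
  then obtain u w where uw: "{u, w} \<in> edges n" "c {u, w} \<noteq> 0" by (blast elim: edgesE)
  then have "0 < c {u, w}" using metric_nonneg[OF c] by force
  then obtain S h where S: "S \<subseteq> verts n" "S \<noteq> {}" "S \<noteq> verts n" and h: "0 < h" "\<forall>e\<in>cut n S. h \<le> c e"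
    using metric_cut_bounded_below[OF c uw(1)] by blast
  have "\<forall>y. sep_feasible n y \<longrightarrow> 2 * h \<le> lin n c y"
    using lin_ge_cut_bound[OF _ metric_nonneg[OF c] S] h by auto
  then show ?thesis using SUBT_ge[OF x] h(1) by force
qed

theorem lemma3:
  fixes n :: nat and c0 c1 x0 :: "nat set \<Rightarrow> real"
  assumes "n \<ge> 3"
    and "metric n c0"
    and "TOUR n c0 = 1"
    and "sep_optimal n c0 x0"
    and "c1_argmin n x0 c1"
  shows "TOUR n c1 / SUBT n c1 \<ge> TOUR n c0 / SUBT n c0"
proof -
  have c1: "metric n c1" "1 \<le> TOUR n c1"
    using assms(5) by (simp_all add: c1_argmin_def c1_feasible_iff_TOUR_ge_1)
  have x0: "sep_feasible n x0" using assms(4) by (simp add: sep_optimal_def)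
  have "c1_feasible n c0" using assms(2,3) by (simp add: c1_feasible_iff_TOUR_ge_1)
  then have "lin n x0 c1 \<le> lin n x0 c0" using assms(5) by (simp add: c1_argmin_def)
  then have "SUBT n c1 \<le> SUBT n c0"
    using SUBT_le[OF metric_nonneg[OF c1(1)] x0] SUBT_eq_if_sep_optimal[OF assms(4)]
    by (simp add: lin_commute)
  moreover have "0 < SUBT n c1" using SUBT_pos_if_TOUR_pos[OF c1(1) x0] c1(2) by simp
  ultimately have "TOUR n c0 / SUBT n c0 \<le> 1 / SUBT n c1"
    using assms(3) by (simp add: frac_le)
  also have "\<dots> \<le> TOUR n c1 / SUBT n c1" using c1(2) \<open>0 < SUBT n c1\<close> by (simp add: divide_right_mono)
  finally show ?thesis .
qed

end
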